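(* Let $g:\mathbb{R}^n\to\mathbb{R}^s$ be $C^2$, $D\subset\mathbb{R}^s$ closed, $\Gamma=g^{-1}(D)$, $\bar x\in\Gamma$, and assume (A1), (A2). Let $\bar x^*\in\hat N_\Gamma(\bar x)$ and let $\bar\lambda$ be the unique vector with $\bar\lambda\in\hat N_D(g(\bar x))$, $\nabla g(\bar x)^T\bar\lambda=\bar x^*$. Then $$\hat N_{\operatorname{gph}\hat N_\Gamma}(\bar x,\bar x^* )=\Big\{(w^*,w)\ \Big|\ \exists v^*\in\mathbb{R}^s:\ (v^*,\nabla g(\bar x)w)\in\hat N_{\operatorname{gph}\hat N_D}(g(\bar x),\bar\lambda),\ w^*=-\nabla^2\langle\bar\lambda,g\rangle(\bar x)w+\nabla g(\bar x)^Tv^*\Big\}.$$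
   Context: Standing assumptions (A1), (A2) for $g:\mathbb{R}^n\to\mathbb{R}^s$ ($C^2$), closed $D\subset\mathbb{R}^s$, $\Gamma=g^{-1}(D)$, $\bar x\in\Gamma$: (A1) There exist a closed set $\Theta\subset\mathbb{R}^d$, a twice continuously differentiable mapping $h:\mathbb{R}^s\to\mathbb{R}^d$ and a neighborhood $\mathcal V$ of $g(\bar x)$ such that $\nabla h(g(\bar x))$ is surjective and $D\cap\mathcal V=\{z\in\mathcal V\mid h(z)\in\Theta\}$. (A2) $\operatorname{range}\nabla g(\bar x)+\ker\nabla h(g(\bar x))=\mathbb{R}^s$. Tangent cone $T_A(\bar a)=\limsup_{t\searrow0}(A-\bar a)/t$; regular normal cone $\hat N_A(\bar a)=(T_A(\bar a))^\circ$, with $\hat N_A(a)=\emptyset$ for $a\notin A$. $\operatorname{gph}F$ is the graph of $F$. $\nabla^2\langle\lambda,g\rangle(x)$ is the Hessian of $x\mapsto\langle\lambda,g(x)\rangle$. *)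

theory Defs
  imports "HOL-Analysis.Analysis"
begin

definition tangent_cone :: "'a::real_normed_vector set \<Rightarrow> 'a \<Rightarrow> 'a set" where
  "tangent_cone A a = {w. \<exists>(t::nat \<Rightarrow> real) u. (\<forall>k. t k > 0) \<and> t \<longlonglongrightarrow> 0 \<and>
       u \<longlonglongrightarrow> w \<and> (\<forall>k. a + t k *\<^sub>R u k \<in> A)}"

definition polar_cone :: "'a::real_inner set \<Rightarrow> 'a set" where
  "polar_cone K = {v. \<forall>w\<in>K. inner v w \<le> 0}"

definition regular_normal_cone :: "'a::real_inner set \<Rightarrow> 'a \<Rightarrow> 'a set" where
  "regular_normal_cone A a = (if a \<in> A then polar_cone (tangent_cone A a) else {})"

definition gph :: "('a \<Rightarrow> 'b set) \<Rightarrow> ('a \<times> 'b) set" where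
  "gph F = {(x, y). y \<in> F x}"

definition C2_with :: "('a::euclidean_space \<Rightarrow> 'b::euclidean_space) \<Rightarrow> ('a \<Rightarrow> 'a \<Rightarrow>\<^sub>L 'b)
     \<Rightarrow> ('a \<Rightarrow> 'a \<Rightarrow>\<^sub>L 'a \<Rightarrow>\<^sub>L 'b) \<Rightarrow> bool" where
  "C2_with f f' f'' \<longleftrightarrow>
     (\<forall>x. (f has_derivative blinfun_apply (f' x)) (at x)) \<and>
     (\<forall>x. (f' has_derivative blinfun_apply (f'' x)) (at x)) \<and>
     continuous_on UNIV f''"

text \<open>Hessian of x \<mapsto> \<langle>\<lambda>, g x\<rangle> at a point, applied to a vector w, where B is the second
  derivative of g at that point: the vector H w with \<langle>H w, u\<rangle> = \<langle>\<lambda>, B w u\<rangle>.\<close>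
definition hess_mult :: "'b::euclidean_space \<Rightarrow> ('a::euclidean_space \<Rightarrow>\<^sub>L 'a \<Rightarrow>\<^sub>L 'b) \<Rightarrow> 'a \<Rightarrow> 'a" where
  "hess_mult lam B w = adjoint (blinfun_apply (blinfun_apply B w)) lam"

end

theory Submission
  imports Defs
begin

text \<open>Near \<open>g x\<^sub>0\<close> the constraint is \<open>\<Gamma> = F\<^sup>-\<^sup>1(\<Theta>)\<close> with \<open>F = h \<circ> g\<close>, and by (A2) the
  derivative \<open>\<nabla>F(x\<^sub>0) = \<nabla>h(g x\<^sub>0) \<nabla>g(x\<^sub>0)\<close> is onto. For a \<open>C\<^sup>1\<close> map \<open>F\<close> with onto derivative a
  contraction argument solves \<open>F(x + z) = y\<close> with \<open>|z| = O(|y - F x|)\<close> uniformly near the base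
  point, so tangent directions of \<open>\<Theta>\<close> lift to \<open>F\<^sup>-\<^sup>1(\<Theta>)\<close>. This gives
  \<open>N(F\<^sup>-\<^sup>1\<Theta>, x) = \<nabla>F(x)\<^sup>T N(\<Theta>, F x)\<close> with a unique multiplier, and, after differentiating
  \<open>x \<mapsto> \<nabla>F(x)\<^sup>T \<nu>\<close>, the tangent cone of the graph of the normal cone map of \<open>F\<^sup>-\<^sup>1(\<Theta>)\<close> as
  the image of the corresponding tangent cone for \<open>\<Theta>\<close>. Applying this to \<open>F = h \<circ> g\<close> and to \<open>h\<close>
  (which describes \<open>D\<close> near \<open>g x\<^sub>0\<close>) and polarising, both sides are expressed through the same
  cone: the symmetric Hessian terms act as shears, which commute with polarity, and what remains
  is a pull-back along the onto map \<open>\<nabla>h(g x\<^sub>0) \<nabla>g(x\<^sub>0)\<close>.\<close>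

section \<open>Tangent and regular normal cones\<close>

lemma tangent_cone_eventuallyI:
  assumes "\<And>k. t k > 0" "t \<longlonglongrightarrow> 0" "u \<longlonglongrightarrow> w"
    and "eventually (\<lambda>k. a + t k *\<^sub>R u k \<in> A) sequentially"
  shows "w \<in> tangent_cone A a"
proof -
  from assms(4) obtain N where N: "\<And>k. k \<ge> N \<Longrightarrow> a + t k *\<^sub>R u k \<in> A"
    by (auto simp: eventually_sequentially)
  have "(\<lambda>k. t (k + N)) \<longlonglongrightarrow> 0" "(\<lambda>k. u (k + N)) \<longlonglongrightarrow> w"
    using assms(2,3) by (auto intro: LIMSEQ_ignore_initial_segment)
  then show ?thesis unfolding tangent_cone_def
    using assms(1) N by (intro CollectI exI[of _ "\<lambda>k. t (k + N)"] exI[of _ "\<lambda>k. u (k + N)"]) auto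
qed

lemma zero_in_tangent_cone:
  assumes "a \<in> A" shows "0 \<in> tangent_cone A a"
proof -
  have "(\<lambda>k. 1 / (real k + 1)) \<longlonglongrightarrow> 0"
    using LIMSEQ_inverse_real_of_nat by (simp add: inverse_eq_divide add.commute)
  then show ?thesis unfolding tangent_cone_def using assms
    by (intro CollectI exI[of _ "\<lambda>k. 1 / (real k + 1)"] exI[of _ "\<lambda>k. 0"]) auto
qed

lemma Pair_tangent_coneE:
  assumes "(u, v) \<in> tangent_cone S (a, b)"
  obtains t uk vk where "\<And>k. t k > 0" "t \<longlonglongrightarrow> 0" "uk \<longlonglongrightarrow> u" "vk \<longlonglongrightarrow> v"
    "\<And>k. (a + t k *\<^sub>R uk k, b + t k *\<^sub>R vk k) \<in> S"
proof -
  obtain t w where t: "\<And>k. t k > 0" "t \<longlonglongrightarrow> 0" and w: "w \<longlonglongrightarrow> (u, v)"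
    and S: "\<And>k. (a, b) + t k *\<^sub>R w k \<in> S"
    using assms unfolding tangent_cone_def by blast
  have "(a, b) + t k *\<^sub>R w k = (a + t k *\<^sub>R fst (w k), b + t k *\<^sub>R snd (w k))" for k
    by (simp add: prod_eq_iff)
  then have "(a + t k *\<^sub>R fst (w k), b + t k *\<^sub>R snd (w k)) \<in> S" for k using S[of k] by simp
  moreover have "(\<lambda>k. fst (w k)) \<longlonglongrightarrow> u" "(\<lambda>k. snd (w k)) \<longlonglongrightarrow> v"
    using tendsto_fst[OF w] tendsto_snd[OF w] by simp_all
  ultimately show ?thesis using that t by blast
qed

lemma tangent_cone_local_subset:
  assumes "open U" "a \<in> U" "A \<inter> U \<subseteq> B"
  shows "tangent_cone A a \<subseteq> tangent_cone B a"
proof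
  fix w assume "w \<in> tangent_cone A a"
  then obtain t u where t: "\<And>k. t k > 0" "t \<longlonglongrightarrow> 0" and u: "u \<longlonglongrightarrow> w"
    and A: "\<And>k. a + t k *\<^sub>R u k \<in> A" unfolding tangent_cone_def by blast
  have "(\<lambda>k. a + t k *\<^sub>R u k) \<longlonglongrightarrow> a + 0 *\<^sub>R w" by (intro tendsto_intros t u)
  then have "eventually (\<lambda>k. a + t k *\<^sub>R u k \<in> U) sequentially"
    using assms(1,2) by (simp add: topological_tendstoD)
  then have "eventually (\<lambda>k. a + t k *\<^sub>R u k \<in> B) sequentially"
    by eventually_elim (use A assms(3) in blast)
  then show "w \<in> tangent_cone B a" by (rule tangent_cone_eventuallyI[OF t u])
qed

lemma regular_normal_cone_local:
  assumes "open U" "a \<in> U" "A \<inter> U = B \<inter> U"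
  shows "regular_normal_cone A a = regular_normal_cone B a"
proof -
  have "tangent_cone A a = tangent_cone B a"
    using tangent_cone_local_subset[OF assms(1,2)] assms(3) by (metis inf.cobounded1 subset_antisym)
  moreover have "a \<in> A \<longleftrightarrow> a \<in> B" using assms by blast
  ultimately show ?thesis unfolding regular_normal_cone_def by simp
qed

lemma regular_normal_cone_gph_local:
  assumes "open U" "a \<in> U" "A \<inter> U = B \<inter> U"
  shows "regular_normal_cone (gph (regular_normal_cone A)) (a, v)
       = regular_normal_cone (gph (regular_normal_cone B)) (a, v)"
proof (rule regular_normal_cone_local)
  show "open (U \<times> UNIV)" using assms(1) by (simp add: open_Times)
  show "(a, v) \<in> U \<times> UNIV" using assms(2) by simp
  show "gph (regular_normal_cone A) \<inter> (U \<times> UNIV) = gph (regular_normal_cone B) \<inter> (U \<times> UNIV)"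
    using regular_normal_cone_local[OF assms(1) _ assms(3)] by (auto simp: gph_def)
qed

section \<open>Adjoints and polar cones\<close>

lemma linear_blinfun_apply: "linear (blinfun_apply A)"
  by (rule bounded_linear.linear[OF blinfun.bounded_linear_right])

lemma adjoint_eq_sum_Basis:
  fixes f :: "'a::euclidean_space \<Rightarrow> 'b::euclidean_space"
  assumes "linear f"
  shows "adjoint f y = (\<Sum>i\<in>Basis. (f i \<bullet> y) *\<^sub>R i)"
proof (rule euclidean_eqI)
  fix b :: 'a assume b: "b \<in> Basis"
  have "b \<bullet> (\<Sum>i\<in>Basis. (f i \<bullet> y) *\<^sub>R i) = (\<Sum>i\<in>Basis. (f i \<bullet> y) * (b \<bullet> i))"
    by (simp add: inner_sum_right)
  also have "\<dots> = f b \<bullet> y" using b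
    by (simp add: inner_Basis if_distrib sum.delta cong: if_cong)
  finally show "adjoint f y \<bullet> b = (\<Sum>i\<in>Basis. (f i \<bullet> y) *\<^sub>R i) \<bullet> b"
    by (simp add: adjoint_clauses[OF assms] inner_commute)
qed

lemma adjoint_compose:
  fixes A :: "'a::euclidean_space \<Rightarrow> 'b::euclidean_space" and B :: "'b \<Rightarrow> 'c::euclidean_space"
  assumes "linear A" "linear B"
  shows "adjoint (B \<circ> A) = adjoint A \<circ> adjoint B"
  by (rule adjoint_unique) (simp add: adjoint_clauses[OF assms(1)] adjoint_clauses[OF assms(2)])

lemma adjoint_blinfun_compose:
  fixes A :: "'b::euclidean_space \<Rightarrow>\<^sub>L 'c::euclidean_space" and B :: "'a::euclidean_space \<Rightarrow>\<^sub>L 'b"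
  shows "adjoint (blinfun_apply (A o\<^sub>L B)) = adjoint (blinfun_apply B) \<circ> adjoint (blinfun_apply A)"
proof -
  have "blinfun_apply (A o\<^sub>L B) = blinfun_apply A \<circ> blinfun_apply B" by (rule ext) simp
  then show ?thesis by (simp add: adjoint_compose linear_blinfun_apply)
qed

lemma adjoint_blinfun_diff:
  fixes A B :: "'a::euclidean_space \<Rightarrow>\<^sub>L 'b::euclidean_space"
  shows "adjoint (blinfun_apply A) y - adjoint (blinfun_apply B) y = adjoint (blinfun_apply (A - B)) y"
  by (simp add: adjoint_eq_sum_Basis[OF linear_blinfun_apply] sum_subtractf[symmetric]
      blinfun.diff_left inner_diff_left scaleR_diff_left)

lemma norm_adjoint_blinfun_le:
  fixes A :: "'a::euclidean_space \<Rightarrow>\<^sub>L 'b::euclidean_space"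
  shows "norm (adjoint (blinfun_apply A) y) \<le> norm A * norm y"
proof -
  let ?v = "adjoint (blinfun_apply A) y"
  have "norm ?v ^ 2 = blinfun_apply A ?v \<bullet> y"
    by (simp add: power2_norm_eq_inner adjoint_clauses(1)[OF linear_blinfun_apply])
  also have "\<dots> \<le> norm A * norm ?v * norm y"
    by (intro order_trans[OF norm_cauchy_schwarz] mult_right_mono norm_blinfun) simp
  finally show ?thesis
    by (cases "norm ?v = 0") (auto simp: power2_eq_square mult_le_cancel_left mult_ac)
qed

lemma tendsto_adjoint_blinfun:
  fixes A :: "nat \<Rightarrow> 'a::euclidean_space \<Rightarrow>\<^sub>L 'b::euclidean_space"
  assumes "A \<longlonglongrightarrow> A0" "y \<longlonglongrightarrow> y0"
  shows "(\<lambda>k. adjoint (blinfun_apply (A k)) (y k)) \<longlonglongrightarrow> adjoint (blinfun_apply A0) y0"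
  unfolding adjoint_eq_sum_Basis[OF linear_blinfun_apply]
  by (intro tendsto_intros blinfun.tendsto assms)

lemma surj_if_adjoint_bounded_below:
  fixes M :: "'a::euclidean_space \<Rightarrow> 'b::euclidean_space"
  assumes M: "linear M" and bound: "\<And>\<nu>. norm \<nu> \<le> c * norm (adjoint M \<nu>)"
  shows "surj M"
proof -
  have "inj (adjoint M)"
    unfolding linear_injective_0[OF adjoint_linear[OF M]] using bound by (metis mult_zero_right norm_le_zero_iff norm_zero)
  then show ?thesis using M by simp
qed

lemma nonpos_on_kernel_imp_range_adjoint:
  fixes M :: "'a::euclidean_space \<Rightarrow> 'b::euclidean_space"
  assumes M: "linear M" and p: "\<And>k. M k = 0 \<Longrightarrow> p \<bullet> k \<le> 0"
  obtains e where "p = adjoint M e"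
proof -
  have "p \<bullet> k = 0" if "M k = 0" for k
    using p[OF that] p[of "-k"] that linear_neg[OF M, of k] by simp
  then have "p \<in> (M -` {0})\<^sup>\<bottom>"
    by (auto simp: orthogonal_comp_def orthogonal_def inner_commute)
  also have "M -` {0} = (range (adjoint M))\<^sup>\<bottom>" by (rule ker_orthogonal_comp_adjoint[OF M])
  also have "(range (adjoint M))\<^sup>\<bottom>\<^sup>\<bottom> = range (adjoint M)"
    by (intro orthogonal_comp_self linear_subspace_image adjoint_linear M subspace_UNIV)
  finally show ?thesis using that by blast
qed

lemma polar_cone_vimage_surj:
  fixes M :: "'a::euclidean_space \<Rightarrow> 'b::euclidean_space"
  assumes M: "linear M" "surj M" and C: "0 \<in> C"
  shows "polar_cone {u. M u \<in> C} = adjoint M ` polar_cone C"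
proof
  show "adjoint M ` polar_cone C \<subseteq> polar_cone {u. M u \<in> C}"
    using M(1) by (auto simp: polar_cone_def adjoint_clauses)
next
  show "polar_cone {u. M u \<in> C} \<subseteq> adjoint M ` polar_cone C"
  proof
    fix v assume v: "v \<in> polar_cone {u. M u \<in> C}"
    have "v \<bullet> k \<le> 0" if "M k = 0" for k using v that C by (simp add: polar_cone_def)
    then obtain e where e: "v = adjoint M e" using nonpos_on_kernel_imp_range_adjoint[OF M(1)] by metis
    have "e \<bullet> c \<le> 0" if "c \<in> C" for c
    proof -
      obtain u where u: "c = M u" using M(2) by (metis surjD)
      have "e \<bullet> c = v \<bullet> u" using e u adjoint_clauses(2)[OF M(1)] by simp
      also have "\<dots> \<le> 0" using v u that by (auto simp: polar_cone_def)
      finally show ?thesis .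
    qed
    then show "v \<in> adjoint M ` polar_cone C" using e by (auto simp: polar_cone_def)
  qed
qed

lemma polar_cone_shear:
  assumes H: "\<And>u w. H u \<bullet> w = u \<bullet> H w"
  shows "polar_cone {(u, H u + v) | u v. (u, v) \<in> K} = {(ws, w). (ws + H w, w) \<in> polar_cone K}"
proof -
  have "(ws, w) \<bullet> (u, H u + v) = (ws + H w, w) \<bullet> (u, v)" for ws w u v
    by (simp add: inner_Pair inner_add_left inner_add_right) (metis H inner_commute)
  then show ?thesis unfolding polar_cone_def by fastforce
qed

lemma polar_cone_adjoint_chain:
  fixes A :: "'n::euclidean_space \<Rightarrow> 's::euclidean_space" and B :: "'s \<Rightarrow> 'd::euclidean_space"
  assumes A: "linear A" and B: "linear B" and BA: "surj (B \<circ> A)" and T0: "(0, 0) \<in> T"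
  shows "polar_cone {(u, adjoint A (adjoint B \<eta>)) | u \<eta>. (B (A u), \<eta>) \<in> T}
    = {(ws, w). \<exists>vs. (vs, A w) \<in> polar_cone {(z, adjoint B \<eta>) | z \<eta>. (B z, \<eta>) \<in> T} \<and> ws = adjoint A vs}"
    (is "polar_cone ?G = ?R")
proof (intro subset_antisym subrelI)
  note cA = adjoint_clauses[OF A] and cB = adjoint_clauses[OF B]
  have pairing: "(ws, w) \<bullet> (u, adjoint A (adjoint B \<eta>)) = ws \<bullet> u + B (A w) \<bullet> \<eta>" for ws w u \<eta>
    by (simp add: inner_Pair cA cB)
  fix ws w assume P: "(ws, w) \<in> polar_cone ?G"
  then have P': "ws \<bullet> u + B (A w) \<bullet> \<eta> \<le> 0" if "(B (A u), \<eta>) \<in> T" for u \<eta>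
    using that pairing unfolding polar_cone_def by fastforce
  have lin: "linear (B \<circ> A)" using A B by (rule linear_compose)
  have "ws \<bullet> k \<le> 0" if "(B \<circ> A) k = 0" for k using P'[of k 0] T0 that by simp
  then obtain \<xi> where \<xi>: "ws = adjoint (B \<circ> A) \<xi>"
    using nonpos_on_kernel_imp_range_adjoint[OF lin] by metis
  have "(adjoint B \<xi>, A w) \<in> polar_cone {(z, adjoint B \<eta>) | z \<eta>. (B z, \<eta>) \<in> T}"
    unfolding polar_cone_def
  proof (clarify)
    fix z \<eta> assume T: "(B z, \<eta>) \<in> T"
    obtain u where u: "B z = B (A u)" using BA by (metis comp_apply surjD)
    have "(adjoint B \<xi>, A w) \<bullet> (z, adjoint B \<eta>) = ws \<bullet> u + B (A w) \<bullet> \<eta>"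
      using u by (simp add: \<xi> inner_Pair cA cB adjoint_compose[OF A B])
    also have "\<dots> \<le> 0" using P' T u by simp
    finally show "(adjoint B \<xi>, A w) \<bullet> (z, adjoint B \<eta>) \<le> 0" .
  qed
  then show "(ws, w) \<in> ?R" using \<xi> adjoint_compose[OF A B] by auto
next
  note cA = adjoint_clauses[OF A] and cB = adjoint_clauses[OF B]
  fix ws w assume "(ws, w) \<in> ?R"
  then obtain vs where P: "(vs, A w) \<in> polar_cone {(z, adjoint B \<eta>) | z \<eta>. (B z, \<eta>) \<in> T}"
    and ws: "ws = adjoint A vs" by blast
  show "(ws, w) \<in> polar_cone ?G"
  proof (unfold polar_cone_def, clarify)
    fix u \<eta> assume "(B (A u), \<eta>) \<in> T"
    then have "(vs, A w) \<bullet> (A u, adjoint B \<eta>) \<le> 0" using P unfolding polar_cone_def by blast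
    then show "(ws, w) \<bullet> (u, adjoint A (adjoint B \<eta>)) \<le> 0"
      by (simp add: ws inner_Pair cA cB)
  qed
qed

lemma polar_cone_graph_chain_rule:
  fixes A :: "'n::euclidean_space \<Rightarrow> 's::euclidean_space" and B :: "'s \<Rightarrow> 'd::euclidean_space"
    and Hg :: "'n \<Rightarrow> 'n" and Hh :: "'s \<Rightarrow> 's"
  assumes A: "linear A" and B: "linear B" and BA: "surj (B \<circ> A)" and T0: "(0, 0) \<in> T"
    and Hg: "\<And>u w. Hg u \<bullet> w = u \<bullet> Hg w" and Hh: "\<And>u w. Hh u \<bullet> w = u \<bullet> Hh w"
  shows "polar_cone {(u, Hg u + adjoint A (Hh (A u)) + adjoint A (adjoint B \<eta>)) | u \<eta>. (B (A u), \<eta>) \<in> T}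
    = {(ws, w). \<exists>vs. (vs, A w) \<in> polar_cone {(z, Hh z + adjoint B \<eta>) | z \<eta>. (B z, \<eta>) \<in> T}
                    \<and> ws = - Hg w + adjoint A vs}"
proof -
  define KG where "KG = {(u, adjoint A (adjoint B \<eta>)) | u \<eta>. (B (A u), \<eta>) \<in> T}"
  define KD where "KD = {(z, adjoint B \<eta>) | z \<eta>. (B z, \<eta>) \<in> T}"
  define HG where "HG u = Hg u + adjoint A (Hh (A u))" for u
  have HG: "HG u \<bullet> w = u \<bullet> HG w" for u w
    by (simp add: HG_def inner_add_left inner_add_right adjoint_clauses[OF A] Hg Hh)
  have "{(u, Hg u + adjoint A (Hh (A u)) + adjoint A (adjoint B \<eta>)) | u \<eta>. (B (A u), \<eta>) \<in> T}
      = {(u, HG u + v) | u v. (u, v) \<in> KG}"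
    by (auto simp: HG_def KG_def)
  also have "polar_cone \<dots> = {(ws, w). \<exists>vs. (vs, A w) \<in> polar_cone KD \<and> ws + HG w = adjoint A vs}"
    unfolding polar_cone_shear[OF HG] KG_def KD_def polar_cone_adjoint_chain[OF A B BA T0] by simp
  also have "\<dots> = {(ws, w). \<exists>vs. (vs + Hh (A w), A w) \<in> polar_cone KD \<and> ws = - Hg w + adjoint A vs}"
  proof -
    have eq: "ws + HG w = adjoint A (vs + Hh (A w)) \<longleftrightarrow> ws = - Hg w + adjoint A vs" for ws w vs
      using linear_add[OF adjoint_linear[OF A]] by (auto simp: HG_def algebra_simps)
    have "(\<exists>vs. (vs, A w) \<in> polar_cone KD \<and> ws + HG w = adjoint A vs) \<longleftrightarrow>
        (\<exists>vs. (vs + Hh (A w), A w) \<in> polar_cone KD \<and> ws = - Hg w + adjoint A vs)" for ws w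
      using eq[of ws w] eq[of ws w "_ - Hh (A w)"] by (metis diff_add_cancel)
    then show ?thesis by auto
  qed
  also have "\<dots> = {(ws, w). \<exists>vs. (vs, A w) \<in> polar_cone {(z, Hh z + v) | z v. (z, v) \<in> KD}
                    \<and> ws = - Hg w + adjoint A vs}"
    by (simp add: polar_cone_shear[OF Hh])
  also have "{(z, Hh z + v) | z v. (z, v) \<in> KD} = {(z, Hh z + adjoint B \<eta>) | z \<eta>. (B z, \<eta>) \<in> T}"
    by (auto simp: KD_def)
  finally show ?thesis .
qed

section \<open>Difference quotients and local solvability\<close>

lemma eventually_choice:
  assumes "eventually (\<lambda>k. \<exists>z. P k z) F"
  obtains f where "eventually (\<lambda>k. P k (f k)) F"
proof -
  from assms have "eventually (\<lambda>k. P k (SOME z. P k z)) F" by eventually_elim (rule someI_ex)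
  then show ?thesis by (rule that)
qed

lemma diff_quotient_tendsto:
  fixes F :: "'a::real_normed_vector \<Rightarrow> 'b::real_normed_vector"
  assumes F: "(F has_derivative F') (at p)"
    and t: "\<And>k. t k > 0" "t \<longlonglongrightarrow> 0" and u: "u \<longlonglongrightarrow> w"
  shows "(\<lambda>k. (1 / t k) *\<^sub>R (F (p + t k *\<^sub>R u k) - F p)) \<longlonglongrightarrow> F' w"
proof -
  have lin: "bounded_linear F'" using F by (rule has_derivative_bounded_linear)
  define \<rho> where "\<rho> h = (if h = 0 then 0 else (F (p + h) - F p - F' h) /\<^sub>R norm h)" for h
  have "((\<lambda>y. (F y - F p - F' (y - p)) /\<^sub>R norm (y - p)) \<longlongrightarrow> 0) (at p)"
    using F by (simp add: has_derivative_at_within)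
  then have "((\<lambda>h. (F (p + h) - F p - F' h) /\<^sub>R norm h) \<longlongrightarrow> 0) (at 0)"
    by (simp add: LIM_offset_zero_iff)
  then have "(\<rho> \<longlongrightarrow> 0) (at 0)"
    by (rule tendsto_cong[THEN iffD1, rotated]) (auto simp: eventually_at_filter \<rho>_def)
  then have "isCont \<rho> 0" by (simp add: isCont_def \<rho>_def)
  moreover have "(\<lambda>k. t k *\<^sub>R u k) \<longlonglongrightarrow> 0" using tendsto_scaleR[OF t(2) u] by simp
  ultimately have "(\<lambda>k. \<rho> (t k *\<^sub>R u k)) \<longlonglongrightarrow> 0" using isCont_tendsto_compose by (fastforce simp: \<rho>_def)
  then have "(\<lambda>k. norm (u k) *\<^sub>R \<rho> (t k *\<^sub>R u k) + F' (u k)) \<longlonglongrightarrow> norm w *\<^sub>R 0 + F' w"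
    by (intro tendsto_intros u bounded_linear.tendsto[OF lin])
  moreover have "norm (u k) *\<^sub>R \<rho> (t k *\<^sub>R u k) + F' (u k) = (1 / t k) *\<^sub>R (F (p + t k *\<^sub>R u k) - F p)" for k
    using t(1)[of k] by (auto simp: \<rho>_def linear_simps[OF lin] field_simps scaleR_diff_right)
  ultimately show ?thesis by simp
qed

lemma contraction_fixpoint_in_cball:
  fixes T :: "'a::banach \<Rightarrow> 'a"
  assumes r: "r \<ge> 0" and T0: "norm (T 0) \<le> r"
    and lip: "\<And>a b. a \<in> cball 0 (2 * r) \<Longrightarrow> b \<in> cball 0 (2 * r) \<Longrightarrow> dist (T a) (T b) \<le> 1/2 * dist a b"
  obtains z where "norm z \<le> 2 * r" "T z = z"
proof -
  have "T ` cball 0 (2 * r) \<subseteq> cball 0 (2 * r)"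
  proof clarify
    fix a :: 'a assume a: "a \<in> cball 0 (2 * r)"
    have "norm (T a) \<le> norm (T a - T 0) + norm (T 0)" by (metis norm_triangle_ineq diff_add_cancel)
    also have "\<dots> \<le> 1/2 * norm a + r" using lip[OF a, of 0] r T0 by (simp add: dist_norm)
    also have "\<dots> \<le> 2 * r" using a by simp
    finally show "T a \<in> cball 0 (2 * r)" by simp
  qed
  then have "\<exists>!z\<in>cball 0 (2 * r). T z = z"
    using r lip by (intro Banach_fix[of _ "1/2"]) (auto simp: complete_eq_closed)
  then show ?thesis using that by auto
qed

text \<open>The Newton-type map \<open>z \<mapsto> z - (F (x + R z) - y)\<close>, with \<open>R\<close> a right inverse of \<open>F' x\<^sub>0\<close>,
  is a contraction as long as \<open>F'\<close> stays close to \<open>F' x\<^sub>0\<close>.\<close>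
lemma right_inverse_newton_solution:
  fixes F :: "'a::euclidean_space \<Rightarrow> 'b::euclidean_space" and F' :: "'a \<Rightarrow> 'a \<Rightarrow>\<^sub>L 'b"
  assumes der: "\<And>x. (F has_derivative blinfun_apply (F' x)) (at x)"
    and R: "linear R" "\<And>v. blinfun_apply (F' x0) (R v) = v"
    and K: "K > 0" "\<And>v. norm (R v) \<le> K * norm v"
    and close: "\<And>p. dist p x0 < \<epsilon> \<Longrightarrow> dist (F' p) (F' x0) < 1 / (2 * K)"
    and xy: "dist x x0 + K * (2 * norm (y - F x)) < \<epsilon>"
  obtains z where "norm z \<le> 2 * K * norm (y - F x)" "F (x + z) = y"
proof -
  define r where "r = norm (y - F x)"
  define S where "S = cball (0::'b) (2 * r)"
  define T where "T z = z - (F (x + R z) - y)" for z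
  have Rz: "norm (R z) \<le> K * (2 * r)" if "z \<in> S" for z
    using that K by (intro order_trans[OF K(2) mult_left_mono]) (auto simp: S_def)
  have near: "dist (x + R z) x0 < \<epsilon>" if "z \<in> S" for z
  proof -
    have "dist (x + R z) x0 \<le> dist x x0 + norm (R z)"
      by (metis dist_norm dist_triangle2 norm_minus_commute add_diff_cancel_left')
    also have "\<dots> < \<epsilon>" using xy Rz[OF that] unfolding r_def by linarith
    finally show ?thesis .
  qed
  have T': "(T has_derivative (\<lambda>v. v - blinfun_apply (F' (x + R z)) (R v))) (at z within S)" for z
  proof -
    have "((\<lambda>z. x + R z) has_derivative R) (at z)"
      using has_derivative_add[OF has_derivative_const linear_imp_has_derivative[OF R(1)]] by simp
    then have "((\<lambda>z. F (x + R z)) has_derivative (\<lambda>v. blinfun_apply (F' (x + R z)) (R v))) (at z)"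
      using der[of "x + R z"] by (auto intro: has_derivative_compose[unfolded o_def])
    then have "(T has_derivative (\<lambda>v. v - (blinfun_apply (F' (x + R z)) (R v) - 0))) (at z)"
      unfolding T_def by (intro has_derivative_diff has_derivative_ident has_derivative_const)
    then show ?thesis by (simp add: has_derivative_at_withinI)
  qed
  have T'_bound: "onorm (\<lambda>v. v - blinfun_apply (F' (x + R z)) (R v)) \<le> 1/2" if "z \<in> S" for z
  proof (rule onorm_bound)
    fix v
    have "norm (v - blinfun_apply (F' (x + R z)) (R v)) = norm (blinfun_apply (F' x0 - F' (x + R z)) (R v))"
      by (simp add: R(2) blinfun.diff_left)
    also have "\<dots> \<le> (1 / (2 * K)) * (K * norm v)"
      using close[OF near[OF that]] K
      by (intro order_trans[OF norm_blinfun] mult_mono) (auto simp: dist_norm norm_minus_commute)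
    finally show "norm (v - blinfun_apply (F' (x + R z)) (R v)) \<le> 1/2 * norm v" using K(1) by simp
  qed simp
  have "dist (T a) (T b) \<le> 1/2 * dist a b" if "a \<in> S" "b \<in> S" for a b
    using differentiable_bound[OF _ T' T'_bound that] by (simp add: S_def dist_norm)
  moreover have "norm (T 0) \<le> r"
    using linear_0[OF R(1)] by (simp add: T_def r_def norm_minus_commute)
  ultimately obtain z where z: "norm z \<le> 2 * r" "T z = z"
    using contraction_fixpoint_in_cball[of r T] by (auto simp: S_def r_def)
  have "norm (R z) \<le> 2 * K * r" using Rz z(1) by (simp add: S_def mult_ac)
  moreover have "F (x + R z) = y" using z(2) by (simp add: T_def)
  ultimately show ?thesis using that[of "R z"] by (simp add: r_def)
qed

lemma surjective_derivative_local_solvability: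
  fixes F :: "'a::euclidean_space \<Rightarrow> 'b::euclidean_space" and F' :: "'a \<Rightarrow> 'a \<Rightarrow>\<^sub>L 'b"
  assumes der: "\<And>x. (F has_derivative blinfun_apply (F' x)) (at x)"
    and cont: "isCont F' x0" and surj: "surj (blinfun_apply (F' x0))"
  shows "\<exists>\<delta>>0. \<exists>C. \<forall>x y. dist x x0 < \<delta> \<longrightarrow> norm (y - F x) < \<delta> \<longrightarrow>
            (\<exists>z. norm z \<le> C * norm (y - F x) \<and> F (x + z) = y)"
proof -
  obtain R where R: "linear R" "blinfun_apply (F' x0) \<circ> R = id"
    using real_vector.linear_surjective_right_inverse[OF linear_blinfun_apply surj] by blast
  have RR: "blinfun_apply (F' x0) (R v) = v" for v using R(2) by (metis comp_apply id_apply)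
  obtain K where K: "K > 0" "\<And>v. norm (R v) \<le> K * norm v" using linear_bounded_pos[OF R(1)] by blast
  obtain \<epsilon> where \<epsilon>: "\<epsilon> > 0" "\<And>p. dist p x0 < \<epsilon> \<Longrightarrow> dist (F' p) (F' x0) < 1 / (2 * K)"
  proof -
    have "1 / (2 * K) > 0" using K(1) by simp
    then show ?thesis using cont that unfolding continuous_at_eps_delta by blast
  qed
  define \<delta> where "\<delta> = \<epsilon> / (1 + 2 * K)"
  have "\<exists>z. norm z \<le> 2 * K * norm (y - F x) \<and> F (x + z) = y"
    if "dist x x0 < \<delta>" "norm (y - F x) < \<delta>" for x y
  proof -
    have "dist x x0 + K * (2 * norm (y - F x)) < \<delta> + K * (2 * \<delta>)"
      using that K(1) by (intro add_strict_mono) auto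
    also have "\<dots> = \<delta> * (1 + 2 * K)" by (simp add: algebra_simps)
    also have "\<dots> = \<epsilon>" using K(1) by (simp add: \<delta>_def)
    finally have "dist x x0 + K * (2 * norm (y - F x)) < \<epsilon>" .
    from right_inverse_newton_solution[OF der R(1) RR K \<epsilon>(2) this] show ?thesis by blast
  qed
  moreover have "\<delta> > 0" using \<epsilon> K by (simp add: \<delta>_def)
  ultimately show ?thesis by blast
qed

section \<open>Second derivatives\<close>

lemma C2_withD:
  assumes "C2_with f f' f''"
  shows "(f has_derivative blinfun_apply (f' x)) (at x)" "(f' has_derivative blinfun_apply (f'' x)) (at x)"
    "isCont f' x" "isCont f x"
  using assms unfolding C2_with_def by (auto intro: has_derivative_continuous)

lemma has_real_derivative_along_line:
  fixes \<Phi> :: "'a::real_normed_vector \<Rightarrow> 'b::real_normed_vector"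
  assumes der: "\<And>y. (\<Phi> has_derivative D y) (at y)" and l: "bounded_linear L"
  shows "((\<lambda>s. L (\<Phi> (a + s *\<^sub>R u))) has_real_derivative L (D (a + s *\<^sub>R u) u)) (at s)"
proof -
  have "((\<lambda>s. a + s *\<^sub>R u) has_derivative (\<lambda>h. h *\<^sub>R u)) (at s)"
    by (auto intro!: derivative_eq_intros)
  from has_derivative_compose[OF this der]
  have "((\<lambda>s. \<Phi> (a + s *\<^sub>R u)) has_derivative (\<lambda>h. D (a + s *\<^sub>R u) (h *\<^sub>R u))) (at s)"
    by (simp add: o_def)
  then have "((\<lambda>s. L (\<Phi> (a + s *\<^sub>R u))) has_derivative (\<lambda>h. L (D (a + s *\<^sub>R u) (h *\<^sub>R u)))) (at s)"
    by (rule bounded_linear.has_derivative[OF l])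
  moreover have "bounded_linear (D (a + s *\<^sub>R u))" using der by (rule has_derivative_bounded_linear)
  ultimately show ?thesis
    by (simp add: has_field_derivative_def linear_simps[OF l] bounded_linear.linear[THEN linear_scale] mult_commute_abs)
qed

definition second_difference :: "('a::real_vector \<Rightarrow> 'b::real_vector) \<Rightarrow> 'a \<Rightarrow> 'a \<Rightarrow> 'a \<Rightarrow> real \<Rightarrow> 'b" where
  "second_difference f x u v t = f (x + t *\<^sub>R u + t *\<^sub>R v) - f (x + t *\<^sub>R u) - f (x + t *\<^sub>R v) + f x"

lemma second_difference_commute: "second_difference f x u v t = second_difference f x v u t"
  by (simp add: second_difference_def algebra_simps)

lemma second_difference_mean_value:
  fixes f :: "'a::euclidean_space \<Rightarrow> 'b::euclidean_space"
  assumes C2: "C2_with f f' f''" and t: "t > 0"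
  obtains \<xi> \<rho> where "0 < \<xi>" "\<xi> < t" "0 < \<rho>" "\<rho> < t"
    "e \<bullet> second_difference f x u v t
       = t\<^sup>2 * (e \<bullet> blinfun_apply (blinfun_apply (f'' (x + \<xi> *\<^sub>R u + \<rho> *\<^sub>R v)) v) u)"
proof -
  have d1: "\<And>y. (f has_derivative blinfun_apply (f' y)) (at y)"
    and d2: "\<And>y. (f' has_derivative blinfun_apply (f'' y)) (at y)"
    using C2 unfolding C2_with_def by auto
  define \<phi> where "\<phi> s = e \<bullet> f ((x + t *\<^sub>R v) + s *\<^sub>R u) - e \<bullet> f (x + s *\<^sub>R u)" for s
  define \<phi>' where "\<phi>' s = e \<bullet> blinfun_apply (f' ((x + t *\<^sub>R v) + s *\<^sub>R u)) u
      - e \<bullet> blinfun_apply (f' (x + s *\<^sub>R u)) u" for s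
  have "(\<phi> has_real_derivative \<phi>' s) (at s)" for s
    unfolding \<phi>_def[abs_def] \<phi>'_def
    by (intro DERIV_diff has_real_derivative_along_line[OF d1] bounded_linear_inner_right)
  then obtain \<xi> where \<xi>: "0 < \<xi>" "\<xi> < t" "\<phi> t - \<phi> 0 = t * \<phi>' \<xi>"
    using MVT2[OF t, of \<phi> \<phi>'] by auto
  define \<psi> where "\<psi> r = e \<bullet> blinfun_apply (f' ((x + \<xi> *\<^sub>R u) + r *\<^sub>R v)) u" for r
  define \<psi>' where "\<psi>' r = e \<bullet> blinfun_apply (blinfun_apply (f'' ((x + \<xi> *\<^sub>R u) + r *\<^sub>R v)) v) u" for r
  have "bounded_linear (\<lambda>M. e \<bullet> blinfun_apply M u)"
    by (intro bounded_linear_compose[OF bounded_linear_inner_right] blinfun.bounded_linear_left)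
  then have "(\<psi> has_real_derivative \<psi>' r) (at r)" for r
    unfolding \<psi>_def[abs_def] \<psi>'_def by (rule has_real_derivative_along_line[OF d2])
  then obtain \<rho> where \<rho>: "0 < \<rho>" "\<rho> < t" "\<psi> t - \<psi> 0 = t * \<psi>' \<rho>"
    using MVT2[OF t, of \<psi> \<psi>'] by auto
  have "\<phi>' \<xi> = \<psi> t - \<psi> 0" by (simp add: \<phi>'_def \<psi>_def add_ac)
  then have "\<phi> t - \<phi> 0 = t\<^sup>2 * \<psi>' \<rho>" using \<xi>(3) \<rho>(3) by (simp add: power2_eq_square)
  then show ?thesis using that[OF \<xi>(1,2) \<rho>(1,2)]
    by (simp add: \<phi>_def \<psi>'_def second_difference_def inner_diff_right inner_add_right add_ac)
qed

lemma second_difference_quotient_tendsto: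
  fixes f :: "'a::euclidean_space \<Rightarrow> 'b::euclidean_space"
  assumes C2: "C2_with f f' f''"
  shows "((\<lambda>t. e \<bullet> second_difference f x u v t / t\<^sup>2) \<longlongrightarrow> e \<bullet> blinfun_apply (blinfun_apply (f'' x) v) u)
    (at_right 0)"
proof (rule tendstoI)
  fix \<epsilon> :: real assume \<epsilon>: "\<epsilon> > 0"
  define K where "K = 2 * (norm e * norm v * norm u + 1)"
  have K: "K > 0" by (simp add: K_def add_nonneg_pos)
  have "isCont f'' x" using C2 by (simp add: C2_with_def continuous_on_eq_continuous_at)
  then obtain d where d: "d > 0" "\<And>p. dist p x < d \<Longrightarrow> dist (f'' p) (f'' x) < \<epsilon> / K"
    using \<epsilon> K unfolding continuous_at_eps_delta by (meson divide_pos_pos)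
  define \<delta> where "\<delta> = d / (norm u + norm v + 1)"
  have nuv: "norm u + norm v + 1 > 0" by (simp add: add_nonneg_pos)
  have \<delta>: "\<delta> > 0" using d nuv by (simp add: \<delta>_def)
  have "\<bar>e \<bullet> second_difference f x u v t / t\<^sup>2 - e \<bullet> blinfun_apply (blinfun_apply (f'' x) v) u\<bar> < \<epsilon>"
    if t: "0 < t" "t < \<delta>" for t
  proof -
    obtain \<xi> \<rho> where \<xi>\<rho>: "0 < \<xi>" "\<xi> < t" "0 < \<rho>" "\<rho> < t"
      and mv: "e \<bullet> second_difference f x u v t
        = t\<^sup>2 * (e \<bullet> blinfun_apply (blinfun_apply (f'' (x + \<xi> *\<^sub>R u + \<rho> *\<^sub>R v)) v) u)"
      using second_difference_mean_value[OF C2 t(1)] by blast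
    define p where "p = x + \<xi> *\<^sub>R u + \<rho> *\<^sub>R v"
    have "dist p x \<le> \<xi> * norm u + \<rho> * norm v"
      using \<xi>\<rho> by (simp add: p_def dist_norm) (metis norm_triangle_ineq norm_scaleR abs_of_pos)
    also have "\<dots> \<le> t * (norm u + norm v + 1)"
      using \<xi>\<rho> by (simp add: distrib_left) (smt (verit) mult_right_mono norm_ge_zero)
    also have "\<dots> < d" using t nuv by (simp add: \<delta>_def pos_less_divide_eq)
    finally have pd: "dist p x < d" .
    have "\<bar>e \<bullet> second_difference f x u v t / t\<^sup>2 - e \<bullet> blinfun_apply (blinfun_apply (f'' x) v) u\<bar>
        = \<bar>e \<bullet> blinfun_apply (blinfun_apply (f'' p - f'' x) v) u\<bar>"
      using t(1) by (simp add: mv p_def blinfun.diff_left inner_diff_right)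
    also have "\<dots> \<le> norm e * (norm (f'' p - f'' x) * norm v * norm u)"
      by (intro order_trans[OF Cauchy_Schwarz_ineq2] mult_left_mono order_trans[OF norm_blinfun]
          mult_right_mono norm_blinfun) auto
    also have "\<dots> \<le> norm e * ((\<epsilon> / K) * norm v * norm u)"
      using d(2)[OF pd] by (intro mult_left_mono mult_right_mono) (auto simp: dist_norm)
    also have "\<dots> < \<epsilon>"
      using \<epsilon> K by (simp add: K_def field_simps) (smt (verit, best) mult_nonneg_nonneg norm_ge_zero mult_pos_pos)
    finally show ?thesis .
  qed
  then show "eventually (\<lambda>t. dist (e \<bullet> second_difference f x u v t / t\<^sup>2)
      (e \<bullet> blinfun_apply (blinfun_apply (f'' x) v) u) < \<epsilon>) (at_right 0)"
    unfolding eventually_at_right_field dist_real_def using \<delta> by blast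
qed

lemma C2_with_second_derivative_symmetric:
  fixes f :: "'a::euclidean_space \<Rightarrow> 'b::euclidean_space"
  assumes C2: "C2_with f f' f''"
  shows "blinfun_apply (blinfun_apply (f'' x) u) v = blinfun_apply (blinfun_apply (f'' x) v) u"
proof (rule euclidean_eqI)
  fix e :: 'b
  have "((\<lambda>t. e \<bullet> second_difference f x u v t / t\<^sup>2) \<longlongrightarrow> e \<bullet> blinfun_apply (blinfun_apply (f'' x) u) v)
      (at_right 0)"
    using second_difference_quotient_tendsto[OF C2, of e x v u] by (simp add: second_difference_commute)
  with second_difference_quotient_tendsto[OF C2, of e x u v]
  show "blinfun_apply (blinfun_apply (f'' x) u) v \<bullet> e = blinfun_apply (blinfun_apply (f'' x) v) u \<bullet> e"
    using tendsto_unique[OF trivial_limit_at_right_real] by (simp add: inner_commute)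
qed

lemma hess_mult_eq_sum: "hess_mult lam B w = (\<Sum>i\<in>Basis. (blinfun_apply (blinfun_apply B w) i \<bullet> lam) *\<^sub>R i)"
  unfolding hess_mult_def by (rule adjoint_eq_sum_Basis[OF linear_blinfun_apply])

lemma hess_mult_symmetric:
  assumes "C2_with f f' f''"
  shows "hess_mult lam (f'' x) u \<bullet> w = u \<bullet> hess_mult lam (f'' x) w"
  using C2_with_second_derivative_symmetric[OF assms, of x u w]
  by (simp add: hess_mult_def adjoint_clauses[OF linear_blinfun_apply] inner_commute)

lemma has_derivative_adjoint_apply:
  assumes f': "(f' has_derivative blinfun_apply B) (at x)" and lam: "(lam has_derivative L) (at x)"
  shows "((\<lambda>y. adjoint (blinfun_apply (f' y)) (lam y)) has_derivative
           (\<lambda>u. hess_mult (lam x) B u + adjoint (blinfun_apply (f' x)) (L u))) (at x)"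
proof -
  have "((\<lambda>y. blinfun_apply (f' y) i) has_derivative (\<lambda>u. blinfun_apply (blinfun_apply B u) i)) (at x)" for i
    by (rule bounded_linear.has_derivative[OF blinfun.bounded_linear_left f'])
  then have "((\<lambda>y. \<Sum>i\<in>Basis. (blinfun_apply (f' y) i \<bullet> lam y) *\<^sub>R i) has_derivative
      (\<lambda>u. \<Sum>i\<in>Basis. (blinfun_apply (f' x) i \<bullet> L u + blinfun_apply (blinfun_apply B u) i \<bullet> lam x) *\<^sub>R i)) (at x)"
    by (intro has_derivative_sum has_derivative_scaleR_left has_derivative_inner lam)
  then show ?thesis
    by (simp add: hess_mult_eq_sum adjoint_eq_sum_Basis[OF linear_blinfun_apply] scaleR_add_left
        sum.distrib add.commute)
qed

lemma has_derivative_adjoint_apply_const: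
  assumes "(f' has_derivative blinfun_apply B) (at x)"
  shows "((\<lambda>y. adjoint (blinfun_apply (f' y)) \<nu>) has_derivative hess_mult \<nu> B) (at x)"
  using has_derivative_adjoint_apply[where f'=f' and x=x and lam="\<lambda>_. \<nu>" and L="\<lambda>_. 0", OF assms has_derivative_const]
  by (simp add: linear_0[OF adjoint_linear[OF linear_blinfun_apply]])

section \<open>Preimages under a submersion\<close>

locale submersion_at =
  fixes F :: "'a::euclidean_space \<Rightarrow> 'b::euclidean_space" and F' :: "'a \<Rightarrow> 'a \<Rightarrow>\<^sub>L 'b"
    and x0 :: 'a
  assumes F_derivative: "\<And>x. (F has_derivative blinfun_apply (F' x)) (at x)"
    and F'_continuous: "isCont F' x0" and F'_surj: "surj (blinfun_apply (F' x0))"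
begin

abbreviation F'_adj :: "'a \<Rightarrow> 'b \<Rightarrow> 'a" where
  "F'_adj x \<equiv> adjoint (blinfun_apply (F' x))"

lemma linear_F'_adj: "linear (F'_adj x)"
  by (rule adjoint_linear[OF linear_blinfun_apply])

lemma F'_adj_lower_bound:
  obtains c r where "c > 0" "r > 0" "\<And>x \<nu>. dist x x0 < r \<Longrightarrow> norm \<nu> \<le> c * norm (F'_adj x \<nu>)"
proof -
  have "inj (F'_adj x0)" using F'_surj by (simp add: linear_blinfun_apply)
  then obtain L where L: "linear L" "L \<circ> F'_adj x0 = id"
    using real_vector.linear_injective_left_inverse[OF linear_F'_adj] by blast
  obtain K where K: "K > 0" "\<And>v. norm (L v) \<le> K * norm v" using linear_bounded_pos[OF L(1)] by blast
  have bound0: "norm \<nu> \<le> K * norm (F'_adj x0 \<nu>)" for \<nu>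
    using K(2)[of "F'_adj x0 \<nu>"] L(2) by (metis comp_apply id_apply)
  obtain r where r: "r > 0" "\<And>x. dist x x0 < r \<Longrightarrow> dist (F' x) (F' x0) < 1 / (2 * K)"
  proof -
    have "1 / (2 * K) > 0" using K(1) by simp
    then show ?thesis using F'_continuous that unfolding continuous_at_eps_delta by blast
  qed
  have "norm \<nu> \<le> (2 * K) * norm (F'_adj x \<nu>)" if x: "dist x x0 < r" for x \<nu>
  proof -
    have "norm (F'_adj x0 \<nu>) \<le> norm (F'_adj x \<nu>) + norm (F'_adj x0 \<nu> - F'_adj x \<nu>)"
      by (metis norm_triangle_ineq diff_add_cancel add.commute)
    also have "norm (F'_adj x0 \<nu> - F'_adj x \<nu>) \<le> norm (F' x0 - F' x) * norm \<nu>"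
      unfolding adjoint_blinfun_diff by (rule norm_adjoint_blinfun_le)
    also have "\<dots> \<le> (1 / (2 * K)) * norm \<nu>"
      using r(2)[OF x] by (intro mult_right_mono) (auto simp: dist_norm norm_minus_commute)
    finally have "K * norm (F'_adj x0 \<nu>) \<le> K * (norm (F'_adj x \<nu>) + (1 / (2 * K)) * norm \<nu>)"
      using K(1) by (intro mult_left_mono) auto
    also have "\<dots> = K * norm (F'_adj x \<nu>) + norm \<nu> / 2" using K(1) by (simp add: distrib_left)
    finally show ?thesis using bound0[of \<nu>] by simp
  qed
  then show ?thesis using that[of "2 * K" r] r(1) K(1) by simp
qed

text \<open>\<open>r\<close> is the radius of the ball around \<open>x\<^sub>0\<close> (and the admissible residual), \<open>c\<close> the
  constant bounding \<open>\<nu>\<close> by \<open>\<nabla>F(x)\<^sup>T \<nu>\<close>, and \<open>C\<close> the constant of the solvability estimate.\<close>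
definition uniform_regularity :: "real \<Rightarrow> real \<Rightarrow> real \<Rightarrow> bool" where
  "uniform_regularity r c C \<longleftrightarrow> r > 0 \<and> c > 0 \<and>
     (\<forall>x \<nu>. dist x x0 < r \<longrightarrow> norm \<nu> \<le> c * norm (F'_adj x \<nu>)) \<and>
     (\<forall>x y. dist x x0 < r \<longrightarrow> norm (y - F x) < r \<longrightarrow> (\<exists>z. norm z \<le> C * norm (y - F x) \<and> F (x + z) = y))"

lemma uniform_regularity_exists:
  obtains r c C where "uniform_regularity r c C"
proof -
  obtain c r1 where c: "c > 0" "r1 > 0" "\<And>x \<nu>. dist x x0 < r1 \<Longrightarrow> norm \<nu> \<le> c * norm (F'_adj x \<nu>)"
    using F'_adj_lower_bound by blast
  obtain r2 C where r2: "r2 > 0" "\<And>x y. dist x x0 < r2 \<Longrightarrow> norm (y - F x) < r2 \<Longrightarrow>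
      \<exists>z. norm z \<le> C * norm (y - F x) \<and> F (x + z) = y"
    using surjective_derivative_local_solvability[OF F_derivative F'_continuous F'_surj] by blast
  have "uniform_regularity (min r1 r2) c C" unfolding uniform_regularity_def using c r2 by simp
  then show ?thesis by (rule that)
qed

lemma uniform_regularity_surj:
  assumes "uniform_regularity r c C" "dist x x0 < r"
  shows "surj (blinfun_apply (F' x))"
  using assms by (intro surj_if_adjoint_bounded_below[OF linear_blinfun_apply, where c=c])
    (auto simp: uniform_regularity_def)

lemma uniform_regularity_eventually:
  assumes "uniform_regularity r c C" "xk \<longlonglongrightarrow> x0"
  shows "eventually (\<lambda>k. dist (xk k) x0 < r) sequentially"
  using assms by (intro order_tendstoD(2)[OF tendsto_dist[OF _ tendsto_const]])
    (auto simp: uniform_regularity_def)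

text \<open>A tangent direction of the image is lifted to the domain: the curve \<open>p + t u\<close> misses
  \<open>F p + t a\<close> by \<open>o(t)\<close>, and the solvability estimate corrects this with a step of size \<open>o(t)\<close>.\<close>
lemma lift_tangent_sequence:
  assumes reg: "uniform_regularity r c C" and p: "dist p x0 < r"
    and t: "\<And>k. t k > 0" "t \<longlonglongrightarrow> 0" and a: "a \<longlonglongrightarrow> blinfun_apply (F' p) u"
  obtains uu where "uu \<longlonglongrightarrow> u" "eventually (\<lambda>k. F (p + t k *\<^sub>R uu k) = F p + t k *\<^sub>R a k) sequentially"
proof -
  define q where "q k = p + t k *\<^sub>R u" for k
  define e where "e k = a k - (1 / t k) *\<^sub>R (F (q k) - F p)" for k
  have e: "e \<longlonglongrightarrow> 0"
    using tendsto_diff[OF a diff_quotient_tendsto[OF F_derivative[of p] t tendsto_const[of u]]]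
    by (simp add: e_def[abs_def] q_def)
  have residual: "F p + t k *\<^sub>R a k - F (q k) = t k *\<^sub>R e k" for k
    using t(1)[of k] by (simp add: e_def algebra_simps)
  have "(\<lambda>k. p + t k *\<^sub>R u) \<longlonglongrightarrow> p + 0 *\<^sub>R u" by (intro tendsto_intros t)
  then have "eventually (\<lambda>k. dist (q k) x0 < r) sequentially"
    using p by (intro order_tendstoD(2)[OF tendsto_dist[OF _ tendsto_const]]) (simp_all add: q_def[abs_def])
  moreover have "(\<lambda>k. t k * norm (e k)) \<longlonglongrightarrow> 0 * norm (0::'b)" by (intro tendsto_intros t e)
  then have "eventually (\<lambda>k. t k * norm (e k) < r) sequentially"
    using reg by (intro order_tendstoD) (auto simp: uniform_regularity_def)
  ultimately have "eventually (\<lambda>k. \<exists>z. norm z \<le> C * (t k * norm (e k)) \<and> F (q k + z) = F p + t k *\<^sub>R a k)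
      sequentially"
  proof eventually_elim
    case (elim k)
    have "norm (F p + t k *\<^sub>R a k - F (q k)) = t k * norm (e k)"
      using residual[of k] t(1)[of k] by simp
    with elim reg show ?case unfolding uniform_regularity_def by metis
  qed
  then obtain z where z: "eventually (\<lambda>k. norm (z k) \<le> C * (t k * norm (e k)) \<and> F (q k + z k) = F p + t k *\<^sub>R a k)
      sequentially"
    by (rule eventually_choice)
  have "(\<lambda>k. (1 / t k) *\<^sub>R z k) \<longlonglongrightarrow> 0"
  proof (rule Lim_null_comparison)
    show "eventually (\<lambda>k. norm ((1 / t k) *\<^sub>R z k) \<le> C * norm (e k)) sequentially"
      using z
    proof eventually_elim
      case (elim k)
      have "t k > 0" by (rule t(1))
      with elim show ?case by (simp add: divide_le_eq mult_ac)
    qed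
    show "(\<lambda>k. C * norm (e k)) \<longlonglongrightarrow> 0" using tendsto_mult_right_zero[OF tendsto_norm_zero[OF e]] .
  qed
  then have "(\<lambda>k. u + (1 / t k) *\<^sub>R z k) \<longlonglongrightarrow> u + 0" by (intro tendsto_add tendsto_const)
  moreover have "eventually (\<lambda>k. F (p + t k *\<^sub>R (u + (1 / t k) *\<^sub>R z k)) = F p + t k *\<^sub>R a k) sequentially"
    using z by eventually_elim (use t(1) in \<open>simp add: q_def scaleR_add_right add.assoc\<close>)
  ultimately show ?thesis using that by simp
qed

lemma tangent_cone_vimage_near:
  assumes reg: "uniform_regularity r c C" and x: "dist x x0 < r"
  shows "tangent_cone (F -` \<Theta>) x = {u. blinfun_apply (F' x) u \<in> tangent_cone \<Theta> (F x)}"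
proof (intro set_eqI iffI CollectI; clarsimp?)
  fix u assume "u \<in> tangent_cone (F -` \<Theta>) x"
  then obtain t uk where t: "\<And>k. t k > 0" "t \<longlonglongrightarrow> 0" and u: "uk \<longlonglongrightarrow> u"
    and A: "\<And>k. x + t k *\<^sub>R uk k \<in> F -` \<Theta>" unfolding tangent_cone_def by blast
  define a where "a k = (1 / t k) *\<^sub>R (F (x + t k *\<^sub>R uk k) - F x)" for k
  have "a \<longlonglongrightarrow> blinfun_apply (F' x) u"
    unfolding a_def[abs_def] by (rule diff_quotient_tendsto[OF F_derivative t u])
  moreover have "F x + t k *\<^sub>R a k \<in> \<Theta>" for k using A[of k] t(1)[of k] by (simp add: a_def)
  ultimately show "blinfun_apply (F' x) u \<in> tangent_cone \<Theta> (F x)"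
    unfolding tangent_cone_def using t by blast
next
  fix u assume "blinfun_apply (F' x) u \<in> tangent_cone \<Theta> (F x)"
  then obtain t a where t: "\<And>k. t k > 0" "t \<longlonglongrightarrow> 0" and a: "a \<longlonglongrightarrow> blinfun_apply (F' x) u"
    and A: "\<And>k. F x + t k *\<^sub>R a k \<in> \<Theta>" unfolding tangent_cone_def by blast
  obtain uu where uu: "uu \<longlonglongrightarrow> u"
    and ev: "eventually (\<lambda>k. F (x + t k *\<^sub>R uu k) = F x + t k *\<^sub>R a k) sequentially"
    using lift_tangent_sequence[OF reg x t a] by blast
  from ev have "eventually (\<lambda>k. x + t k *\<^sub>R uu k \<in> F -` \<Theta>) sequentially"
    by eventually_elim (use A in simp)
  then show "u \<in> tangent_cone (F -` \<Theta>) x" by (rule tangent_cone_eventuallyI[OF t uu])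
qed

lemma regular_normal_cone_vimage_near:
  assumes reg: "uniform_regularity r c C" and x: "dist x x0 < r"
  shows "regular_normal_cone (F -` \<Theta>) x = F'_adj x ` regular_normal_cone \<Theta> (F x)"
proof (cases "F x \<in> \<Theta>")
  case True
  then show ?thesis
    using polar_cone_vimage_surj[OF linear_blinfun_apply uniform_regularity_surj[OF reg x]
        zero_in_tangent_cone[OF True]]
    by (simp add: regular_normal_cone_def tangent_cone_vimage_near[OF reg x])
qed (simp add: regular_normal_cone_def)

lemma regular_normal_cone_vimage:
  "regular_normal_cone (F -` \<Theta>) x0 = F'_adj x0 ` regular_normal_cone \<Theta> (F x0)"
proof -
  obtain r c C where reg: "uniform_regularity r c C" by (rule uniform_regularity_exists)
  then show ?thesis by (intro regular_normal_cone_vimage_near) (auto simp: uniform_regularity_def)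
qed

lemma in_gph_regular_normal_cone_vimage_iff:
  assumes "uniform_regularity r c C" and "dist x x0 < r"
  shows "(x, v) \<in> gph (regular_normal_cone (F -` \<Theta>)) \<longleftrightarrow>
     (\<exists>\<nu>. \<nu> \<in> regular_normal_cone \<Theta> (F x) \<and> v = F'_adj x \<nu>)"
  using regular_normal_cone_vimage_near[OF assms] by (auto simp: gph_def)

text \<open>The adjoints are uniformly injective near \<open>x\<^sub>0\<close>, so multipliers whose images converge
  converge themselves.\<close>
lemma F'_adj_convergent_preimage:
  assumes reg: "uniform_regularity r c C" and xk: "xk \<longlonglongrightarrow> x0"
    and lim: "(\<lambda>k. F'_adj (xk k) (\<eta> k)) \<longlonglongrightarrow> b"
  obtains \<eta>0 where "\<eta> \<longlonglongrightarrow> \<eta>0" "F'_adj x0 \<eta>0 = b"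
proof -
  obtain M where M: "\<And>k. norm (F'_adj (xk k) (\<eta> k)) \<le> M"
    using convergent_imp_bounded[OF lim] unfolding bounded_iff by auto
  have bounded: "eventually (\<lambda>k. norm (\<eta> k) \<le> c * M) sequentially"
    using uniform_regularity_eventually[OF reg xk]
  proof eventually_elim
    case (elim k)
    then have "norm (\<eta> k) \<le> c * norm (F'_adj (xk k) (\<eta> k))" using reg by (simp add: uniform_regularity_def)
    also have "\<dots> \<le> c * M" using M[of k] reg by (intro mult_left_mono) (auto simp: uniform_regularity_def)
    finally show ?case .
  qed
  have "(\<lambda>k. norm (F' x0 - F' (xk k))) \<longlonglongrightarrow> 0"
    using tendsto_norm[OF tendsto_diff[OF tendsto_const[of "F' x0"] isCont_tendsto_compose[OF F'_continuous xk]]]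
    by simp
  then have "(\<lambda>k. F'_adj x0 (\<eta> k) - F'_adj (xk k) (\<eta> k)) \<longlonglongrightarrow> 0"
  proof (rule tendsto_0_le[where K = "c * M"])
    show "eventually (\<lambda>k. norm (F'_adj x0 (\<eta> k) - F'_adj (xk k) (\<eta> k))
        \<le> norm (norm (F' x0 - F' (xk k))) * (c * M)) sequentially"
      using bounded
    proof eventually_elim
      case (elim k)
      have "norm (F'_adj x0 (\<eta> k) - F'_adj (xk k) (\<eta> k)) \<le> norm (F' x0 - F' (xk k)) * norm (\<eta> k)"
        unfolding adjoint_blinfun_diff by (rule norm_adjoint_blinfun_le)
      also have "\<dots> \<le> norm (F' x0 - F' (xk k)) * (c * M)" using elim by (intro mult_left_mono) auto
      finally show ?case by simp
    qed
  qed
  from tendsto_add[OF lim this] have lim0: "(\<lambda>k. F'_adj x0 (\<eta> k)) \<longlonglongrightarrow> b" by simp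
  have "inj (F'_adj x0)" using F'_surj by (simp add: linear_blinfun_apply)
  then obtain L where L: "linear L" "L \<circ> F'_adj x0 = id"
    using real_vector.linear_injective_left_inverse[OF linear_F'_adj] by blast
  have "(\<lambda>k. L (F'_adj x0 (\<eta> k))) \<longlonglongrightarrow> L b"
    using L(1) lim0 by (auto simp: linear_conv_bounded_linear intro: bounded_linear.tendsto)
  then have \<eta>: "\<eta> \<longlonglongrightarrow> L b" using L(2) by (simp add: pointfree_idE)
  then have "(\<lambda>k. F'_adj x0 (\<eta> k)) \<longlonglongrightarrow> F'_adj x0 (L b)"
    using linear_F'_adj \<eta> by (auto simp: linear_conv_bounded_linear intro: bounded_linear.tendsto)
  with lim0 have "F'_adj x0 (L b) = b" by (rule LIMSEQ_unique[rotated])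
  with \<eta> show ?thesis by (rule that)
qed

lemma tangent_cone_gph_vimage_subset:
  assumes reg: "uniform_regularity r c C"
    and H: "((\<lambda>x. F'_adj x \<nu>0) has_derivative H) (at x0)"
    and uv: "(u, v) \<in> tangent_cone (gph (regular_normal_cone (F -` \<Theta>))) (x0, F'_adj x0 \<nu>0)"
  obtains \<eta> where "(blinfun_apply (F' x0) u, \<eta>) \<in> tangent_cone (gph (regular_normal_cone \<Theta>)) (F x0, \<nu>0)"
    and "v = H u + F'_adj x0 \<eta>"
proof -
  obtain t uk vk where t: "\<And>k. t k > 0" "t \<longlonglongrightarrow> 0" and uk: "uk \<longlonglongrightarrow> u" and vk: "vk \<longlonglongrightarrow> v"
    and A: "\<And>k. (x0 + t k *\<^sub>R uk k, F'_adj x0 \<nu>0 + t k *\<^sub>R vk k) \<in> gph (regular_normal_cone (F -` \<Theta>))"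
    using uv by (elim Pair_tangent_coneE) (rule that)
  define xk where "xk k = x0 + t k *\<^sub>R uk k" for k
  have "xk \<longlonglongrightarrow> x0 + 0 *\<^sub>R u" unfolding xk_def[abs_def] by (intro tendsto_intros t uk)
  then have xk: "xk \<longlonglongrightarrow> x0" by simp
  have "eventually (\<lambda>k. \<exists>\<nu>. \<nu> \<in> regular_normal_cone \<Theta> (F (xk k))
      \<and> F'_adj x0 \<nu>0 + t k *\<^sub>R vk k = F'_adj (xk k) \<nu>) sequentially"
    using uniform_regularity_eventually[OF reg xk]
  proof eventually_elim
    case (elim k)
    with A[of k] show ?case by (simp add: in_gph_regular_normal_cone_vimage_iff[OF reg] xk_def)
  qed
  then obtain \<nu>k where \<nu>k: "eventually (\<lambda>k. \<nu>k k \<in> regular_normal_cone \<Theta> (F (xk k))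
      \<and> F'_adj x0 \<nu>0 + t k *\<^sub>R vk k = F'_adj (xk k) (\<nu>k k)) sequentially"
    by (rule eventually_choice)
  define \<eta>k where "\<eta>k k = (1 / t k) *\<^sub>R (\<nu>k k - \<nu>0)" for k
  define q where "q k = (1 / t k) *\<^sub>R (F'_adj (xk k) \<nu>0 - F'_adj x0 \<nu>0)" for k
  have q: "q \<longlonglongrightarrow> H u" unfolding q_def[abs_def] xk_def by (rule diff_quotient_tendsto[OF H t uk])
  have "eventually (\<lambda>k. F'_adj (xk k) (\<eta>k k) = vk k - q k) sequentially"
    using \<nu>k
  proof eventually_elim
    case (elim k)
    have "t k > 0" by (rule t(1))
    with elim show ?case
      by (simp add: \<eta>k_def q_def linear_scale[OF linear_F'_adj] linear_diff[OF linear_F'_adj]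
          elim[THEN conjunct2, symmetric] scaleR_add_right algebra_simps)
  qed
  with tendsto_diff[OF vk q] have "(\<lambda>k. F'_adj (xk k) (\<eta>k k)) \<longlonglongrightarrow> v - H u"
    by (simp add: tendsto_cong)
  then obtain \<eta> where \<eta>k: "\<eta>k \<longlonglongrightarrow> \<eta>" and \<eta>: "F'_adj x0 \<eta> = v - H u"
    by (rule F'_adj_convergent_preimage[OF reg xk])
  define a where "a k = (1 / t k) *\<^sub>R (F (xk k) - F x0)" for k
  have a: "a \<longlonglongrightarrow> blinfun_apply (F' x0) u"
    unfolding a_def[abs_def] xk_def by (rule diff_quotient_tendsto[OF F_derivative t uk])
  have "eventually (\<lambda>k. (F x0, \<nu>0) + t k *\<^sub>R (a k, \<eta>k k) \<in> gph (regular_normal_cone \<Theta>)) sequentially"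
    using \<nu>k
  proof eventually_elim
    case (elim k)
    have "t k > 0" by (rule t(1))
    then have "(F x0, \<nu>0) + t k *\<^sub>R (a k, \<eta>k k) = (F (xk k), \<nu>k k)" by (simp add: a_def \<eta>k_def)
    with elim show ?case by (simp add: gph_def)
  qed
  then have "(blinfun_apply (F' x0) u, \<eta>) \<in> tangent_cone (gph (regular_normal_cone \<Theta>)) (F x0, \<nu>0)"
    by (rule tangent_cone_eventuallyI[OF t tendsto_Pair[OF a \<eta>k]])
  with \<eta> show ?thesis using that by simp
qed

lemma tangent_cone_gph_vimage_supset:
  assumes reg: "uniform_regularity r c C"
    and H: "((\<lambda>x. F'_adj x \<nu>0) has_derivative H) (at x0)"
    and T: "(blinfun_apply (F' x0) u, \<eta>) \<in> tangent_cone (gph (regular_normal_cone \<Theta>)) (F x0, \<nu>0)"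
  shows "(u, H u + F'_adj x0 \<eta>) \<in> tangent_cone (gph (regular_normal_cone (F -` \<Theta>))) (x0, F'_adj x0 \<nu>0)"
proof -
  obtain t a b where t: "\<And>k. t k > 0" "t \<longlonglongrightarrow> 0" and a: "a \<longlonglongrightarrow> blinfun_apply (F' x0) u"
    and b: "b \<longlonglongrightarrow> \<eta>" and A: "\<And>k. (F x0 + t k *\<^sub>R a k, \<nu>0 + t k *\<^sub>R b k) \<in> gph (regular_normal_cone \<Theta>)"
    using T by (elim Pair_tangent_coneE) (rule that)
  have x0: "dist x0 x0 < r" using reg by (simp add: uniform_regularity_def)
  obtain uu where uu: "uu \<longlonglongrightarrow> u"
    and evF: "eventually (\<lambda>k. F (x0 + t k *\<^sub>R uu k) = F x0 + t k *\<^sub>R a k) sequentially"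
    using lift_tangent_sequence[OF reg x0 t a] by blast
  define xk where "xk k = x0 + t k *\<^sub>R uu k" for k
  have "xk \<longlonglongrightarrow> x0 + 0 *\<^sub>R u" unfolding xk_def[abs_def] by (intro tendsto_intros t uu)
  then have xk: "xk \<longlonglongrightarrow> x0" by simp
  define v where "v k = (1 / t k) *\<^sub>R (F'_adj (xk k) \<nu>0 - F'_adj x0 \<nu>0) + F'_adj (xk k) (b k)" for k
  have "(\<lambda>k. (1 / t k) *\<^sub>R (F'_adj (xk k) \<nu>0 - F'_adj x0 \<nu>0)) \<longlonglongrightarrow> H u"
    unfolding xk_def by (rule diff_quotient_tendsto[OF H t uu])
  moreover have "(\<lambda>k. F'_adj (xk k) (b k)) \<longlonglongrightarrow> F'_adj x0 \<eta>"
    by (rule tendsto_adjoint_blinfun[OF isCont_tendsto_compose[OF F'_continuous xk] b])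
  ultimately have v: "v \<longlonglongrightarrow> H u + F'_adj x0 \<eta>" unfolding v_def[abs_def] by (rule tendsto_add)
  have "eventually (\<lambda>k. (x0, F'_adj x0 \<nu>0) + t k *\<^sub>R (uu k, v k) \<in> gph (regular_normal_cone (F -` \<Theta>)))
      sequentially"
    using uniform_regularity_eventually[OF reg xk] evF
  proof eventually_elim
    case (elim k)
    have "t k > 0" by (rule t(1))
    then have "(x0, F'_adj x0 \<nu>0) + t k *\<^sub>R (uu k, v k) = (xk k, F'_adj (xk k) (\<nu>0 + t k *\<^sub>R b k))"
      by (simp add: v_def xk_def linear_add[OF linear_F'_adj] linear_scale[OF linear_F'_adj] algebra_simps)
    moreover have "\<nu>0 + t k *\<^sub>R b k \<in> regular_normal_cone \<Theta> (F (xk k))"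
      using A[of k] elim(2) by (simp add: gph_def xk_def)
    ultimately show ?case using in_gph_regular_normal_cone_vimage_iff[OF reg elim(1)] by auto
  qed
  then show ?thesis by (rule tangent_cone_eventuallyI[OF t tendsto_Pair[OF uu v]])
qed

lemma tangent_cone_gph_vimage:
  assumes H: "((\<lambda>x. F'_adj x \<nu>0) has_derivative H) (at x0)"
  shows "tangent_cone (gph (regular_normal_cone (F -` \<Theta>))) (x0, F'_adj x0 \<nu>0)
     = {(u, H u + F'_adj x0 \<eta>) | u \<eta>.
          (blinfun_apply (F' x0) u, \<eta>) \<in> tangent_cone (gph (regular_normal_cone \<Theta>)) (F x0, \<nu>0)}"
proof -
  obtain r c C where reg: "uniform_regularity r c C" by (rule uniform_regularity_exists)
  show ?thesis
  proof (intro subset_antisym subrelI)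
    fix u v assume "(u, v) \<in> tangent_cone (gph (regular_normal_cone (F -` \<Theta>))) (x0, F'_adj x0 \<nu>0)"
    then obtain \<eta> where "(blinfun_apply (F' x0) u, \<eta>) \<in> tangent_cone (gph (regular_normal_cone \<Theta>)) (F x0, \<nu>0)"
      and "v = H u + F'_adj x0 \<eta>" by (rule tangent_cone_gph_vimage_subset[OF reg H])
    then show "(u, v) \<in> {(u, H u + F'_adj x0 \<eta>) | u \<eta>.
        (blinfun_apply (F' x0) u, \<eta>) \<in> tangent_cone (gph (regular_normal_cone \<Theta>)) (F x0, \<nu>0)}" by blast
  qed (use tangent_cone_gph_vimage_supset[OF reg H] in blast)
qed

end

section \<open>The reduction \<open>\<Gamma> = (h \<circ> g)\<^sup>-\<^sup>1(\<Theta>)\<close>\<close>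

locale reduction_at =
  fixes g :: "'n::euclidean_space \<Rightarrow> 's::euclidean_space"
    and g' :: "'n \<Rightarrow> 'n \<Rightarrow>\<^sub>L 's" and g'' :: "'n \<Rightarrow> 'n \<Rightarrow>\<^sub>L 'n \<Rightarrow>\<^sub>L 's"
    and h :: "'s \<Rightarrow> 'd::euclidean_space"
    and h' :: "'s \<Rightarrow> 's \<Rightarrow>\<^sub>L 'd" and h'' :: "'s \<Rightarrow> 's \<Rightarrow>\<^sub>L 's \<Rightarrow>\<^sub>L 'd"
    and D :: "'s set" and \<Theta> :: "'d set" and V :: "'s set" and xbar :: 'n
  assumes g_C2: "C2_with g g' g''" and h_C2: "C2_with h h' h''"
    and V_open: "open V" and V_nhd: "g xbar \<in> V" and D_local: "D \<inter> V = {z \<in> V. h z \<in> \<Theta>}"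
    and h'_surj: "surj (blinfun_apply (h' (g xbar)))"
    and transversal: "\<forall>z. \<exists>u k. blinfun_apply (h' (g xbar)) k = 0 \<and> z = blinfun_apply (g' xbar) u + k"
begin

abbreviation Jg :: "'n \<Rightarrow> 's" where "Jg \<equiv> blinfun_apply (g' xbar)"

abbreviation Jh :: "'s \<Rightarrow> 'd" where "Jh \<equiv> blinfun_apply (h' (g xbar))"

lemma surj_Jh_Jg: "surj (Jh \<circ> Jg)"
proof -
  have "\<exists>u. Jh (Jg u) = d" for d
  proof -
    obtain z where z: "Jh z = d" using h'_surj by (metis surjD)
    obtain u k where "Jh k = 0" "z = Jg u + k" using transversal by blast
    then have "Jh (Jg u) = Jh z" by (simp add: blinfun.add_right)
    then show ?thesis using z by blast
  qed
  then show ?thesis by (metis comp_apply surjI)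
qed

sublocale h: submersion_at h h' "g xbar"
  by unfold_locales (use C2_withD[OF h_C2] h'_surj in auto)

sublocale hg: submersion_at "\<lambda>x. h (g x)" "\<lambda>x. h' (g x) o\<^sub>L g' x" xbar
proof
  show "((\<lambda>x. h (g x)) has_derivative blinfun_apply (h' (g x) o\<^sub>L g' x)) (at x)" for x
  proof -
    have "blinfun_apply (h' (g x) o\<^sub>L g' x) = (\<lambda>v. blinfun_apply (h' (g x)) (blinfun_apply (g' x) v))"
      by (rule ext) simp
    then show ?thesis
      using has_derivative_compose[OF C2_withD(1)[OF g_C2, of x] C2_withD(1)[OF h_C2, of "g x"]]
      by (simp add: o_def)
  qed
  have "isCont (\<lambda>x. h' (g x)) xbar" by (rule isCont_o2[OF C2_withD(4)[OF g_C2] C2_withD(3)[OF h_C2]])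
  then show "isCont (\<lambda>x. h' (g x) o\<^sub>L g' x) xbar" unfolding isCont_def
    by (rule bounded_bilinear.tendsto[OF bounded_bilinear_blinfun_compose _ C2_withD(3)[OF g_C2, unfolded isCont_def]])
  show "surj (blinfun_apply (h' (g xbar) o\<^sub>L g' xbar))"
    using surj_Jh_Jg by (simp add: comp_def)
qed

lemma Gamma_eq_vimage_locally: "open (g -` V)" "xbar \<in> g -` V" "g -` D \<inter> g -` V = (\<lambda>x. h (g x)) -` \<Theta> \<inter> g -` V"
proof -
  have "continuous_on UNIV g" using C2_withD(4)[OF g_C2] by (simp add: continuous_on_eq_continuous_at)
  then show "open (g -` V)" using open_vimage[OF V_open] by blast
qed (use V_nhd D_local in auto)

lemma D_eq_vimage_locally: "D \<inter> V = h -` \<Theta> \<inter> V"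
  using D_local by auto

lemma regular_normal_cone_D:
  "regular_normal_cone D (g xbar) = adjoint Jh ` regular_normal_cone \<Theta> (h (g xbar))"
  using regular_normal_cone_local[OF V_open V_nhd D_eq_vimage_locally] h.regular_normal_cone_vimage by simp

lemma regular_normal_cone_Gamma:
  "regular_normal_cone (g -` D) xbar = (\<lambda>\<nu>. adjoint Jg (adjoint Jh \<nu>)) ` regular_normal_cone \<Theta> (h (g xbar))"
  using regular_normal_cone_local[OF Gamma_eq_vimage_locally] hg.regular_normal_cone_vimage
  by (simp add: adjoint_blinfun_compose image_comp[symmetric] comp_def)

lemma multiplier_exists_unique:
  assumes "xstar \<in> regular_normal_cone (g -` D) xbar"
  shows "\<exists>!lam. lam \<in> regular_normal_cone D (g xbar) \<and> adjoint Jg lam = xstar"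
proof (rule ex_ex1I)
  obtain \<nu> where "\<nu> \<in> regular_normal_cone \<Theta> (h (g xbar))" "xstar = adjoint Jg (adjoint Jh \<nu>)"
    using assms regular_normal_cone_Gamma by auto
  then show "\<exists>lam. lam \<in> regular_normal_cone D (g xbar) \<and> adjoint Jg lam = xstar"
    using regular_normal_cone_D by auto
next
  have inj: "inj (adjoint (Jh \<circ> Jg))"
    using surj_Jh_Jg by (simp add: linear_compose linear_blinfun_apply)
  fix l1 l2 assume "l1 \<in> regular_normal_cone D (g xbar) \<and> adjoint Jg l1 = xstar"
    and "l2 \<in> regular_normal_cone D (g xbar) \<and> adjoint Jg l2 = xstar"
  then obtain \<nu>1 \<nu>2 where "l1 = adjoint Jh \<nu>1" "l2 = adjoint Jh \<nu>2"
    "adjoint (Jh \<circ> Jg) \<nu>1 = adjoint (Jh \<circ> Jg) \<nu>2"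
    using regular_normal_cone_D by (auto simp: adjoint_compose linear_blinfun_apply)
  then show "l1 = l2" using inj by (simp add: inj_eq)
qed

lemma tangent_cone_gph_hg:
  "tangent_cone (gph (regular_normal_cone ((\<lambda>x. h (g x)) -` \<Theta>))) (xbar, adjoint Jg (adjoint Jh \<nu>)) =
     {(u, hess_mult (adjoint Jh \<nu>) (g'' xbar) u + adjoint Jg (hess_mult \<nu> (h'' (g xbar)) (Jg u))
          + adjoint Jg (adjoint Jh \<eta>)) | u \<eta>.
        (Jh (Jg u), \<eta>) \<in> tangent_cone (gph (regular_normal_cone \<Theta>)) (h (g xbar), \<nu>)}"
proof -
  have "((\<lambda>x. adjoint (blinfun_apply (h' (g x))) \<nu>) has_derivative (\<lambda>u. hess_mult \<nu> (h'' (g xbar)) (Jg u))) (at xbar)"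
    using has_derivative_compose[OF C2_withD(1)[OF g_C2, of xbar]
        has_derivative_adjoint_apply_const[OF C2_withD(2)[OF h_C2, of "g xbar"]]] by (simp add: o_def)
  from has_derivative_adjoint_apply[OF C2_withD(2)[OF g_C2, of xbar] this]
  have "((\<lambda>x. adjoint (blinfun_apply (h' (g x) o\<^sub>L g' x)) \<nu>) has_derivative
      (\<lambda>u. hess_mult (adjoint Jh \<nu>) (g'' xbar) u + adjoint Jg (hess_mult \<nu> (h'' (g xbar)) (Jg u)))) (at xbar)"
    by (simp add: adjoint_blinfun_compose)
  from hg.tangent_cone_gph_vimage[OF this] show ?thesis
    by (simp add: adjoint_blinfun_compose add.assoc)
qed

lemma tangent_cone_gph_h:
  "tangent_cone (gph (regular_normal_cone (h -` \<Theta>))) (g xbar, adjoint Jh \<nu>) =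
     {(z, hess_mult \<nu> (h'' (g xbar)) z + adjoint Jh \<eta>) | z \<eta>.
        (Jh z, \<eta>) \<in> tangent_cone (gph (regular_normal_cone \<Theta>)) (h (g xbar), \<nu>)}"
  by (rule h.tangent_cone_gph_vimage[OF has_derivative_adjoint_apply_const[OF C2_withD(2)[OF h_C2, of "g xbar"]]])

lemma regular_normal_cone_gph_Gamma:
  assumes xstar: "xstar \<in> regular_normal_cone (g -` D) xbar"
    and lam: "lam \<in> regular_normal_cone D (g xbar)" "adjoint Jg lam = xstar"
  shows "regular_normal_cone (gph (regular_normal_cone (g -` D))) (xbar, xstar) =
     {(wstar, w). \<exists>vstar. (vstar, Jg w) \<in> regular_normal_cone (gph (regular_normal_cone D)) (g xbar, lam)
          \<and> wstar = - hess_mult lam (g'' xbar) w + adjoint Jg vstar}"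
proof -
  obtain \<nu> where \<nu>: "\<nu> \<in> regular_normal_cone \<Theta> (h (g xbar))" "lam = adjoint Jh \<nu>"
    using lam(1) regular_normal_cone_D by auto
  define T where "T = tangent_cone (gph (regular_normal_cone \<Theta>)) (h (g xbar), \<nu>)"
  have T0: "(0, 0) \<in> T"
    using zero_in_tangent_cone[of "(h (g xbar), \<nu>)"] \<nu>(1) by (simp add: T_def gph_def zero_prod_def)
  have in_gph_hg: "(xbar, xstar) \<in> gph (regular_normal_cone ((\<lambda>x. h (g x)) -` \<Theta>))"
    using xstar regular_normal_cone_local[OF Gamma_eq_vimage_locally] by (simp add: gph_def)
  have in_gph_h: "(g xbar, lam) \<in> gph (regular_normal_cone (h -` \<Theta>))"
    using lam(1) regular_normal_cone_local[OF V_open V_nhd D_eq_vimage_locally] by (simp add: gph_def)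
  have "regular_normal_cone (gph (regular_normal_cone D)) (g xbar, lam)
      = polar_cone {(z, hess_mult \<nu> (h'' (g xbar)) z + adjoint Jh \<eta>) | z \<eta>. (Jh z, \<eta>) \<in> T}"
    using regular_normal_cone_gph_local[OF V_open V_nhd D_eq_vimage_locally] in_gph_h
    by (simp add: regular_normal_cone_def tangent_cone_gph_h \<nu>(2) T_def)
  moreover have "regular_normal_cone (gph (regular_normal_cone (g -` D))) (xbar, xstar)
      = polar_cone {(u, hess_mult lam (g'' xbar) u + adjoint Jg (hess_mult \<nu> (h'' (g xbar)) (Jg u))
          + adjoint Jg (adjoint Jh \<eta>)) | u \<eta>. (Jh (Jg u), \<eta>) \<in> T}"
    using regular_normal_cone_gph_local[OF Gamma_eq_vimage_locally] in_gph_hg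
    by (simp add: regular_normal_cone_def tangent_cone_gph_hg \<nu>(2) lam(2)[symmetric] T_def)
  ultimately show ?thesis
    using polar_cone_graph_chain_rule[OF linear_blinfun_apply linear_blinfun_apply surj_Jh_Jg T0
        hess_mult_symmetric[OF g_C2] hess_mult_symmetric[OF h_C2]]
    by simp
qed

end

theorem mainTheorem5:
  fixes g :: "'n::euclidean_space \<Rightarrow> 's::euclidean_space"
    and g' :: "'n \<Rightarrow> 'n \<Rightarrow>\<^sub>L 's" and g'' :: "'n \<Rightarrow> 'n \<Rightarrow>\<^sub>L 'n \<Rightarrow>\<^sub>L 's"
    and D :: "'s set" and xbar xstar :: 'n
    and h :: "'s \<Rightarrow> 'd::euclidean_space"
    and h' :: "'s \<Rightarrow> 's \<Rightarrow>\<^sub>L 'd" and h'' :: "'s \<Rightarrow> 's \<Rightarrow>\<^sub>L 's \<Rightarrow>\<^sub>L 'd"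
    and \<Theta> :: "'d set" and V :: "'s set"
  assumes g_C2: "C2_with g g' g''"
    and D_closed: "closed D"
    and xbar_in: "xbar \<in> g -` D"
    and A1_Theta: "closed \<Theta>"
    and A1_h: "C2_with h h' h''"
    and A1_V: "open V" "g xbar \<in> V"
    and A1_surj: "surj (blinfun_apply (h' (g xbar)))"
    and A1_D: "D \<inter> V = {z \<in> V. h z \<in> \<Theta>}"
    and A2: "\<forall>z. \<exists>u k. blinfun_apply (h' (g xbar)) k = 0 \<and> z = blinfun_apply (g' xbar) u + k"
    and xstar_in: "xstar \<in> regular_normal_cone (g -` D) xbar"
  shows "(\<exists>!lam. lam \<in> regular_normal_cone D (g xbar) \<and>
                 adjoint (blinfun_apply (g' xbar)) lam = xstar) \<and>
         (\<forall>lam. lam \<in> regular_normal_cone D (g xbar) \<and>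
                 adjoint (blinfun_apply (g' xbar)) lam = xstar \<longrightarrow>
           regular_normal_cone (gph (regular_normal_cone (g -` D))) (xbar, xstar) =
             {(wstar, w). \<exists>vstar :: 's.
                 (vstar, blinfun_apply (g' xbar) w)
                    \<in> regular_normal_cone (gph (regular_normal_cone D)) (g xbar, lam) \<and>
                 wstar = - hess_mult lam (g'' xbar) w + adjoint (blinfun_apply (g' xbar)) vstar})"
proof -
  interpret reduction_at g g' g'' h h' h'' D \<Theta> V xbar
    using g_C2 A1_h A1_V A1_surj A1_D A2 by unfold_locales
  show ?thesis
    using multiplier_exists_unique[OF xstar_in] regular_normal_cone_gph_Gamma[OF xstar_in] by blast
qed

end
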